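(* Let $p\ge 2$ and $n\ge 1$ be integers, let $\Sigma$ be a real $p\times p$ symmetric positive definite matrix, and let $x_1,\dots,x_n$ be i.i.d. $N(0,\Sigma)$ random vectors in $\mathbb{R}^p$. Let $\widehat S=\frac1n\sum_{i=1}^n x_ix_i^T$ and $\widehat F=\frac{\mathrm{Tr}(\widehat S)}{p}I_p$. Then the function $$\rho\mapsto E\left\{\left\|(1-\rho)\widehat S+\rho \widehat F-\Sigma\right\|_F^2\right\},\qquad \rho\in\mathbb{R},$$ has a unique minimizer $\rho_O$, and $$\rho_O=\frac{E\{\mathrm{Tr}((\Sigma-\widehat S)(\widehat F-\widehat S))\}}{E\{\|\widehat S-\widehat F\|_F^2\}}=\frac{(1-2/p)\,\mathrm{Tr}(\Sigma^2)+\mathrm{Tr}^2(\Sigma)}{(n+1-2/p)\,\mathrm{Tr}(\Sigma^2)+(1-n/p)\,\mathrm{Tr}^2(\Sigma)}.$$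
   Context: $\|\cdot\|_F$ is the Frobenius norm, $\mathrm{Tr}$ the trace, and $\mathrm{Tr}^2(A)$ means $(\mathrm{Tr}(A))^2$. $\widehat S$ is called the sample covariance and $\widehat F$ the shrinkage target; the estimator $(1-\rho_O)\widehat S+\rho_O\widehat F$ is called the oracle estimator. *)

theory Defs
  imports "HOL-Analysis.Analysis" "HOL-Probability.Probability"
begin

definition sym_posdef :: "real^'p^'p \<Rightarrow> bool" where
  "sym_posdef A \<longleftrightarrow> transpose A = A \<and> (\<forall>x. x \<noteq> 0 \<longrightarrow> x \<bullet> (A *v x) > 0)"

definition mvn_density :: "real^'p^'p \<Rightarrow> real^'p \<Rightarrow> ennreal" where
  "mvn_density Sig x = ennreal ((2 * pi) powr (- real CARD('p) / 2) * det Sig powr (-1/2)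
      * exp (- (x \<bullet> (matrix_inv Sig *v x)) / 2))"

definition outer :: "real^'p \<Rightarrow> real^'p^'p" where
  "outer x = (\<chi> i j. x $ i * x $ j)"

definition frob_sq :: "real^'p^'p \<Rightarrow> real" where
  "frob_sq A = (\<Sum>i\<in>UNIV. \<Sum>j\<in>UNIV. (A $ i $ j)^2)"

definition sample_cov :: "nat \<Rightarrow> (nat \<Rightarrow> real^'p) \<Rightarrow> real^'p^'p" where
  "sample_cov n x = (1 / real n) *\<^sub>R (\<Sum>i\<in>{1..n}. outer (x i))"

definition shrink_target :: "real^'p^'p \<Rightarrow> real^'p^'p" where
  "shrink_target S = (trace S / real CARD('p)) *\<^sub>R mat 1"

end

theory Submission
  imports Defs
begin

text \<open>
  For symmetric \<open>S\<close> the loss \<open>\<parallel>(1-\<rho>) S + \<rho> F - \<Sigma>\<parallel>\<^sup>2\<close> equals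
  \<open>\<parallel>S - \<Sigma>\<parallel>\<^sup>2 - 2\<rho> Tr((\<Sigma> - S)(F - S)) + \<rho>\<^sup>2 \<parallel>S - F\<parallel>\<^sup>2\<close>, so the risk is a quadratic
  \<open>\<alpha> - 2\<rho>\<beta> + \<rho>\<^sup>2\<gamma>\<close> whose unique minimiser is \<open>\<beta>/\<gamma>\<close> once \<open>\<gamma> > 0\<close>.  The coefficients
  are expressed through \<open>S \<bullet> S\<close>, \<open>Tr S\<close>, \<open>(Tr S)\<^sup>2\<close> and \<open>\<Sigma> \<bullet> S\<close>, i.e. through first and
  second moments of the entries of \<open>S\<close>; these follow from Isserlis' theorem
  \<open>E x\<^sub>a x\<^sub>b x\<^sub>c x\<^sub>d = \<Sigma>\<^sub>a\<^sub>b\<Sigma>\<^sub>c\<^sub>d + \<Sigma>\<^sub>a\<^sub>c\<Sigma>\<^sub>b\<^sub>d + \<Sigma>\<^sub>a\<^sub>d\<Sigma>\<^sub>b\<^sub>c\<close> and independence.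
\<close>

subsection \<open>The loss as a quadratic in the shrinkage intensity\<close>

text \<open>On \<open>real^'n^'n\<close> the library inner product is the Frobenius inner product
  \<open>A \<bullet> B = \<Sum>i j. A$i$j * B$i$j\<close>, so the squared Frobenius norm is \<open>A \<bullet> A\<close>.\<close>

lemma frob_sq_inner: "frob_sq A = A \<bullet> A"
  by (simp add: frob_sq_def inner_vec_def power2_eq_square)

lemma symmetric_entry:
  assumes "transpose A = A"
  shows "A $ j $ i = A $ i $ j"
proof -
  have "transpose A $ j $ i = A $ i $ j"
    by (simp add: transpose_def)
  then show ?thesis
    using assms by simp
qed

lemma trace_mult_symmetric:
  fixes A B :: "real^'n^'n"
  assumes "transpose B = B"
  shows "trace (A ** B) = A \<bullet> B"
  by (simp add: trace_def matrix_matrix_mult_def inner_vec_def symmetric_entry[OF assms])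

lemma inner_mat_1: "mat 1 \<bullet> (A :: real^'n^'n) = trace A"
proof -
  have "mat 1 $ i = axis i (1::real)" for i :: 'n
    by (simp add: mat_def axis_def vec_eq_iff)
  have "mat 1 \<bullet> A = (\<Sum>i\<in>UNIV. mat 1 $ i \<bullet> A $ i)"
    by (rule inner_vec_def)
  then show ?thesis
    by (simp add: \<open>\<And>i. mat 1 $ i = axis i 1\<close> inner_axis' trace_def)
qed

lemma shrink_target_inner:
  fixes S A :: "real^'n^'n"
  shows "shrink_target S \<bullet> A = trace S * trace A / real CARD('n)"
  by (simp add: shrink_target_def inner_mat_1)

lemma trace_shrink_target: "trace (shrink_target S) = trace (S :: real^'n^'n)"
  by (simp add: shrink_target_def trace_def mat_def)

lemma transpose_diff: "transpose (A - B) = transpose A - transpose (B :: real^'n^'n)"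
  unfolding transpose_def by (simp add: vec_eq_iff)

lemma shrink_target_symmetric: "transpose (shrink_target S) = shrink_target S"
  unfolding shrink_target_def transpose_scalar transpose_mat ..

lemma shrinkage_loss_expansion:
  fixes S Sig :: "real^'n^'n"
  assumes "transpose S = S"
  shows "frob_sq ((1 - r) *\<^sub>R S + r *\<^sub>R shrink_target S - Sig)
    = frob_sq (S - Sig) - 2 * r * trace ((Sig - S) ** (shrink_target S - S))
      + r\<^sup>2 * frob_sq (S - shrink_target S)"
proof -
  let ?F = "shrink_target S"
  have "transpose (?F - S) = ?F - S"
    using assms by (simp add: transpose_diff shrink_target_symmetric)
  then have "trace ((Sig - S) ** (?F - S)) = (Sig - S) \<bullet> (?F - S)"
    by (rule trace_mult_symmetric)
  also have "\<dots> = (S - Sig) \<bullet> (S - ?F)"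
    by (metis inner_minus_left inner_minus_right minus_diff_eq)
  finally have "trace ((Sig - S) ** (?F - S)) = (S - Sig) \<bullet> (S - ?F)" .
  moreover have "(1 - r) *\<^sub>R S + r *\<^sub>R ?F - Sig = (S - Sig) - r *\<^sub>R (S - ?F)"
    by (simp add: algebra_simps)
  moreover have "frob_sq (U - r *\<^sub>R V) = frob_sq U - 2 * r * (U \<bullet> V) + r\<^sup>2 * frob_sq V"
    for U V :: "real^'n^'n"
    by (simp add: frob_sq_inner inner_diff_left inner_diff_right inner_commute[of V U]
        power2_eq_square algebra_simps)
  ultimately show ?thesis
    by (simp only:)
qed

lemma frob_sq_minus_shrink_target:
  fixes S :: "real^'n^'n"
  shows "frob_sq (S - shrink_target S) = S \<bullet> S - (trace S)\<^sup>2 / real CARD('n)"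
proof -
  have "frob_sq (S - shrink_target S)
      = S \<bullet> S - 2 * (shrink_target S \<bullet> S) + shrink_target S \<bullet> shrink_target S"
    by (simp add: frob_sq_inner inner_diff_left inner_diff_right inner_commute[of S "shrink_target S"])
  then show ?thesis
    by (simp add: shrink_target_inner trace_shrink_target power2_eq_square)
qed

lemma trace_cross_shrink_target:
  fixes S Sig :: "real^'n^'n"
  assumes "transpose S = S"
  shows "trace ((Sig - S) ** (shrink_target S - S))
    = trace Sig * trace S / real CARD('n) - Sig \<bullet> S - (trace S)\<^sup>2 / real CARD('n) + S \<bullet> S"
proof -
  have "transpose (shrink_target S - S) = shrink_target S - S"
    using assms by (simp add: transpose_diff shrink_target_symmetric)
  then have "trace ((Sig - S) ** (shrink_target S - S)) = (Sig - S) \<bullet> (shrink_target S - S)"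
    by (rule trace_mult_symmetric)
  also have "\<dots> = Sig \<bullet> shrink_target S - Sig \<bullet> S - S \<bullet> shrink_target S + S \<bullet> S"
    by (simp add: inner_diff_left inner_diff_right)
  finally show ?thesis
    by (simp add: inner_commute[of Sig "shrink_target S"]
        inner_commute[of S "shrink_target S"] shrink_target_inner power2_eq_square)
qed

lemma quadratic_unique_minimizer:
  fixes R :: "real \<Rightarrow> real" and a b g :: real
  assumes "g > 0" and R: "\<And>r. R r = a - 2 * r * b + r\<^sup>2 * g"
  shows "(\<exists>!\<rho>. \<forall>r. R \<rho> \<le> R r) \<and> (\<forall>\<rho>. (\<forall>r. R \<rho> \<le> R r) \<longrightarrow> \<rho> = b / g)"
proof -
  have gap: "R r - R (b / g) = g * (r - b / g)\<^sup>2" for r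
  proof -
    have "g * (b / g) = b" using \<open>g > 0\<close> by simp
    then show ?thesis
      using \<open>g > 0\<close> unfolding R power2_eq_square by (simp add: algebra_simps)
  qed
  have min: "R (b / g) \<le> R r" for r
    using gap[of r] \<open>g > 0\<close> by (smt (verit) mult_nonneg_nonneg zero_le_power2)
  have unique: "\<rho> = b / g" if "\<forall>r. R \<rho> \<le> R r" for \<rho>
  proof -
    have "g * (\<rho> - b / g)\<^sup>2 \<le> 0"
      using that[rule_format, of "b / g"] gap[of \<rho>] by linarith
    then show ?thesis
      using \<open>g > 0\<close> by (simp add: mult_le_0_iff)
  qed
  show ?thesis
    using min unique by blast
qed

subsection \<open>A factorisation \<open>\<Sigma> = N N\<^sup>T\<close> with \<open>N\<^sup>T \<Sigma>\<^sup>-\<^sup>1 N = I\<close>\<close>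

lemma inner_symmetric_matrix:
  fixes S :: "real^'n^'n"
  assumes "transpose S = S"
  shows "x \<bullet> (S *v y) = y \<bullet> (S *v x)"
proof -
  have "x \<bullet> (S *v y) = (x v* S) \<bullet> y"
    by (rule dot_lmul_matrix[symmetric])
  also have "x v* S = S *v x"
    using transpose_matrix_vector[of S x] assms by simp
  finally show ?thesis
    by (simp add: inner_commute)
qed

lemma dim_hyperplane_section:
  fixes T :: "(real^'n) set"
  assumes T: "subspace T" and "v \<in> T" and wv: "w \<bullet> v \<noteq> 0"
  shows "Suc (dim (T \<inter> {x. w \<bullet> x = 0})) = dim T"
proof -
  define T' where "T' = T \<inter> {x. w \<bullet> x = 0}"
  have "subspace T'"
    unfolding T'_def by (intro subspace_inter T subspace_hyperplane)
  then have "v \<notin> span T'"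
    using wv by (simp add: span_eq_iff[THEN iffD2] T'_def)
  then have dim_insert_v: "dim (insert v T') = Suc (dim T')"
    by (simp add: dim_insert)
  have "dim (insert v T') \<le> dim T"
    using \<open>v \<in> T\<close> by (intro dim_subset) (auto simp: T'_def)
  moreover have "T \<subseteq> span (insert v T')"
  proof
    fix x assume "x \<in> T"
    have "x - ((w \<bullet> x) / (w \<bullet> v)) *\<^sub>R v \<in> T'"
      unfolding T'_def using \<open>x \<in> T\<close> \<open>v \<in> T\<close> T wv
      by (auto simp: subspace_diff subspace_scale inner_diff_right)
    then show "x \<in> span (insert v T')"
      unfolding span_insert using span_base by blast
  qed
  then have "dim T \<le> dim (insert v T')"
    by (metis dim_span dim_subset)
  ultimately show ?thesis
    using dim_insert_v by (simp add: T'_def)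
qed

text \<open>Gram--Schmidt for the inner product \<open>\<langle>x, y\<rangle> = x \<bullet> S y\<close> of a symmetric positive
  definite \<open>S\<close>: every subspace has an \<open>S\<close>-orthonormal basis.\<close>

lemma form_orthonormal_basis:
  fixes S :: "real^'n^'n"
  assumes "sym_posdef S" and "subspace T"
  shows "\<exists>C. C \<subseteq> T \<and> finite C \<and> card C = dim T \<and>
            (\<forall>u\<in>C. \<forall>v\<in>C. u \<bullet> (S *v v) = (if u = v then 1 else 0))"
  using \<open>subspace T\<close>
proof (induction "dim T" arbitrary: T)
  case 0
  then show ?case by (intro exI[of _ "{}"]) auto
next
  case (Suc k T)
  have sym: "transpose S = S" and pos: "\<And>x. x \<noteq> 0 \<Longrightarrow> x \<bullet> (S *v x) > 0"
    using \<open>sym_posdef S\<close> by (auto simp: sym_posdef_def)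
  have "\<not> T \<subseteq> {0}"
    using Suc.hyps(2) by (metis dim_singleton dim_subset le_zero_eq nat.distinct(1))
  then obtain v where "v \<in> T" and "v \<noteq> 0" by blast
  define w where "w = S *v v"
  define c where "c = w \<bullet> v"
  have "c > 0"
    using pos[OF \<open>v \<noteq> 0\<close>] by (simp add: c_def w_def inner_commute)
  define T' where "T' = T \<inter> {x. w \<bullet> x = 0}"
  have "subspace T'"
    unfolding T'_def by (intro subspace_inter Suc.prems subspace_hyperplane)
  have "dim T' = k"
    using dim_hyperplane_section[OF Suc.prems \<open>v \<in> T\<close>, of w] \<open>c > 0\<close> Suc.hyps(2)
    by (simp add: T'_def c_def)
  then obtain C where C: "C \<subseteq> T'" "finite C" "card C = k"
     "\<forall>u\<in>C. \<forall>x\<in>C. u \<bullet> (S *v x) = (if u = x then 1 else 0)"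
    using Suc.hyps(1)[of T'] \<open>subspace T'\<close> by auto
  define v' where "v' = (1 / sqrt c) *\<^sub>R v"
  have "w \<bullet> v' = sqrt c"
    using \<open>c > 0\<close> by (simp add: v'_def c_def real_div_sqrt)
  then have "v' \<notin> C"
    using C(1) \<open>c > 0\<close> by (auto simp: T'_def)
  have orth: "u \<bullet> (S *v v') = 0" if "u \<in> C" for u
  proof -
    have "w \<bullet> u = 0" using that C(1) by (auto simp: T'_def)
    then show ?thesis
      by (simp add: v'_def matrix_vector_mult_scaleR w_def[symmetric] inner_commute)
  qed
  have unit: "v' \<bullet> (S *v v') = 1"
  proof -
    have "v \<bullet> w = c" by (simp add: c_def inner_commute)
    then show ?thesis
      using \<open>c > 0\<close> by (simp add: v'_def matrix_vector_mult_scaleR w_def[symmetric]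
          power2_eq_square[symmetric])
  qed
  show ?case
  proof (intro exI[of _ "insert v' C"] conjI)
    show "insert v' C \<subseteq> T"
      using C(1) \<open>v \<in> T\<close> Suc.prems by (auto simp: T'_def v'_def subspace_scale)
    show "finite (insert v' C)" using C by simp
    show "card (insert v' C) = dim T"
      using C \<open>v' \<notin> C\<close> Suc.hyps(2) by simp
    show "\<forall>u\<in>insert v' C. \<forall>x\<in>insert v' C. u \<bullet> (S *v x) = (if u = x then 1 else 0)"
      using C(4) orth unit \<open>v' \<notin> C\<close> inner_symmetric_matrix[OF sym] by (metis insert_iff)
  qed
qed

lemma sym_posdef_congruent_identity:
  fixes S :: "real^'n^'n"
  assumes "sym_posdef S"
  obtains M :: "real^'n^'n" where "transpose M ** S ** M = mat 1"
proof -
  obtain C where C: "finite C" "card C = CARD('n)"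
     "\<forall>u\<in>C. \<forall>v\<in>C. u \<bullet> (S *v v) = (if u = v then 1 else 0)"
    using form_orthonormal_basis[OF assms subspace_UNIV] by (auto simp: dim_UNIV)
  obtain g where g: "bij_betw g (UNIV::'n set) C"
    using finite_same_card_bij[of "UNIV::'n set" C] C by auto
  define M where "M = (\<chi> i j. g j $ i)"
  have "(transpose M ** S ** M) $ i $ j = (\<Sum>l\<in>UNIV. \<Sum>k\<in>UNIV. g i $ k * S $ k $ l * g j $ l)" for i j
    by (simp add: M_def matrix_matrix_mult_def transpose_def sum_distrib_right)
  also have "\<dots> i j = (\<Sum>k\<in>UNIV. \<Sum>l\<in>UNIV. g i $ k * S $ k $ l * g j $ l)" for i j
    by (rule sum.swap)
  also have "\<dots> i j = g i \<bullet> (S *v g j)" for i j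
    by (simp add: inner_vec_def matrix_vector_mult_def sum_distrib_left mult.assoc)
  also have "g i \<bullet> (S *v g j) = mat 1 $ i $ j" for i j
    using C(3) g by (auto simp: bij_betw_def inj_on_def mat_def)
  finally have "transpose M ** S ** M = mat 1"
    by (simp add: vec_eq_iff)
  then show ?thesis
    using that by blast
qed

lemma sym_posdef_invertible:
  fixes S :: "real^'n^'n"
  assumes "sym_posdef S"
  shows "S ** matrix_inv S = mat 1" "matrix_inv S ** S = mat 1"
proof -
  have "S *v x = 0 \<Longrightarrow> x = 0" for x
    using assms unfolding sym_posdef_def by (metis inner_zero_right less_irrefl)
  then have "invertible S"
    using matrix_left_invertible_ker invertible_left_inverse by blast
  then have "S ** matrix_inv S = mat 1 \<and> matrix_inv S ** S = mat 1"
    unfolding invertible_def matrix_inv_def by (rule someI_ex)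
  then show "S ** matrix_inv S = mat 1" "matrix_inv S ** S = mat 1" by auto
qed

lemma sym_posdef_matrix_inv:
  fixes S :: "real^'n^'n"
  assumes sp: "sym_posdef S"
  shows "sym_posdef (matrix_inv S)"
proof -
  let ?A = "matrix_inv S"
  note inv = sym_posdef_invertible[OF sp]
  have ST: "transpose S = S" using sp by (simp add: sym_posdef_def)
  have "transpose ?A ** S = mat 1"
    using inv(1) by (metis ST matrix_transpose_mul transpose_mat)
  then have "transpose ?A = transpose ?A ** (S ** ?A)"
    using inv(1) by simp
  also have "\<dots> = ?A" using \<open>transpose ?A ** S = mat 1\<close> by (simp add: matrix_mul_assoc)
  finally have sym: "transpose ?A = ?A" .
  have pos: "x \<bullet> (?A *v x) > 0" if "x \<noteq> 0" for x
  proof -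
    let ?y = "?A *v x"
    have Sy: "S *v ?y = x" using inv(1) by (simp add: matrix_vector_mul_assoc)
    have "?y \<noteq> 0" using Sy that by auto
    then have "?y \<bullet> (S *v ?y) > 0" using sp by (simp add: sym_posdef_def)
    then show ?thesis using Sy by (simp add: inner_commute)
  qed
  show ?thesis using sym pos by (simp add: sym_posdef_def)
qed

text \<open>The factor used to standardise a Gaussian vector: \<open>N N\<^sup>T = \<Sigma>\<close> and
  \<open>N\<^sup>T \<Sigma>\<^sup>-\<^sup>1 N = I\<close>, so that \<open>x = N z\<close> turns \<open>x\<^sup>T \<Sigma>\<^sup>-\<^sup>1 x\<close> into \<open>z\<^sup>T z\<close>.\<close>

lemma sym_posdef_factor:
  fixes Sig :: "real^'n^'n"
  assumes sp: "sym_posdef Sig"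
  obtains N :: "real^'n^'n"
  where "transpose N ** matrix_inv Sig ** N = mat 1" and "N ** transpose N = Sig"
proof -
  let ?A = "matrix_inv Sig"
  obtain N :: "real^'n^'n" where N: "transpose N ** ?A ** N = mat 1"
    using sym_posdef_congruent_identity[OF sym_posdef_matrix_inv[OF sp]] by blast
  have N2: "N ** (transpose N ** ?A) = mat 1"
    using N matrix_left_right_inverse by blast
  have "N ** transpose N = N ** transpose N ** (?A ** Sig)"
    by (simp add: sym_posdef_invertible(2)[OF sp])
  also have "\<dots> = (N ** (transpose N ** ?A)) ** Sig" by (simp add: matrix_mul_assoc)
  also have "\<dots> = Sig" by (simp add: N2)
  finally show ?thesis using N that by blast
qed

lemma quadratic_form_congruence:
  fixes N A :: "real^'n^'n"
  assumes "transpose N ** A ** N = mat 1"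
  shows "(N *v z) \<bullet> (A *v (N *v z)) = z \<bullet> z"
proof -
  have "(N *v z) \<bullet> (A *v (N *v z)) = z \<bullet> (transpose N *v (A *v (N *v z)))"
    using dot_lmul_matrix[of z "transpose N"] by simp
  also have "transpose N *v (A *v (N *v z)) = (transpose N ** A ** N) *v z"
    by (simp add: matrix_vector_mul_assoc matrix_mul_assoc)
  finally show ?thesis using assms by simp
qed

subsection \<open>Linear changes of variables on \<open>real^'n\<close> for an arbitrary finite index type\<close>

text \<open>The library computes the Lebesgue measure of linear images only for index types
  that are well-ordered.  Every finite type is in bijection with the well-ordered type
  \<open>{..<CARD('a)}\<close>, and permuting coordinates preserves \<open>lborel\<close>; this transfers the
  result to arbitrary finite index types.\<close>

typedef ('a::finite) index = "{..<CARD('a)}"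
  by (intro exI[of _ 0]) simp

instantiation index :: (finite) wellorder
begin

definition less_eq_index :: "'a index \<Rightarrow> 'a index \<Rightarrow> bool"
  where "x \<le> y \<longleftrightarrow> Rep_index x \<le> Rep_index y"

definition less_index :: "'a index \<Rightarrow> 'a index \<Rightarrow> bool"
  where "x < y \<longleftrightarrow> Rep_index x < Rep_index y"

instance
proof
  fix P :: "'a index \<Rightarrow> bool" and a :: "'a index"
  assume step: "\<And>x. (\<And>y. y < x \<Longrightarrow> P y) \<Longrightarrow> P x"
  show "P a"
    by (induction "Rep_index a" arbitrary: a rule: less_induct)
       (rule step, auto simp: less_index_def)
qed (auto simp: less_eq_index_def less_index_def Rep_index_inject[symmetric])

end

lemma range_Rep_index: "range (Rep_index :: 'a::finite index \<Rightarrow> nat) = {..<CARD('a)}"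
  by (rule type_definition.Rep_range[OF type_definition_index])

instance index :: (finite) finite
proof
  have "finite (range (Rep_index :: 'a index \<Rightarrow> nat))"
    by (simp add: range_Rep_index)
  then show "finite (UNIV :: 'a index set)"
    by (rule finite_imageD) (simp add: inj_on_def Rep_index_inject)
qed

lemma card_index: "CARD('a index) = CARD('a::finite)"
  using card_image[of Rep_index "UNIV :: 'a index set"]
  by (simp add: inj_on_def Rep_index_inject range_Rep_index)

lemma Basis_vec_axis: "(Basis :: (real^'n) set) = range (\<lambda>i. axis i 1)"
  by (auto simp: Basis_vec_def)

lemma prod_Basis_vec:
  "(\<Prod>b\<in>(Basis::(real^'n) set). F b) = (\<Prod>i\<in>UNIV. F (axis i 1))"
  unfolding Basis_vec_axis by (subst prod.reindex) (auto simp: inj_on_def axis_eq_axis)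

lemma linear_borel_measurable:
  fixes f :: "'a::euclidean_space \<Rightarrow> 'b::euclidean_space"
  assumes "linear f"
  shows "f \<in> borel_measurable borel"
  using assms by (simp add: borel_measurable_continuous_onI linear_continuous_on linear_linear)

lemma lborel_reindex:
  fixes \<pi> :: "'q::finite \<Rightarrow> 'n::finite"
  assumes "bij \<pi>"
  shows "distr lborel borel (\<lambda>x::real^'n. \<chi> j. x $ \<pi> j) = (lborel :: (real^'q) measure)"
proof (rule lborel_eqI[symmetric])
  let ?P = "\<lambda>x::real^'n. \<chi> j. x $ \<pi> j" and ?Q = "\<lambda>y::real^'q. \<chi> i. y $ inv \<pi> i"
  have "linear ?P"
    by (rule linearI) (simp_all add: vec_eq_iff)
  then have [measurable]: "?P \<in> borel \<rightarrow>\<^sub>M borel"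
    by (rule linear_borel_measurable)
  fix l u :: "real^'q"
  assume lu: "\<And>b. b \<in> Basis \<Longrightarrow> l \<bullet> b \<le> u \<bullet> b"
  have le: "l $ j \<le> u $ j" for j
    using lu[of "axis j 1"] by (simp add: cart_eq_inner_axis)
  have pre: "?P -` box l u = box (?Q l) (?Q u)"
    using assms by (auto simp: mem_box_cart) (metis bij_inv_eq_iff)+
  have "(\<Prod>i\<in>UNIV. (u - l) $ inv \<pi> i) = (\<Prod>j\<in>UNIV. (u - l) $ j)"
    using prod.reindex_bij_betw[OF bij_betw_inv_into[OF assms], of "\<lambda>j. (u - l) $ j"] by simp
  moreover have "\<forall>b\<in>Basis. ?Q l \<bullet> b \<le> ?Q u \<bullet> b"
    using le by (auto simp: Basis_vec_def inner_axis)
  ultimately show "emeasure (distr lborel borel ?P) (box l u) = (\<Prod>b\<in>Basis. (u - l) \<bullet> b)"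
    by (simp add: emeasure_distr pre emeasure_lborel_box_eq prod_Basis_vec cart_eq_inner_axis[symmetric])
qed simp

lemma lborel_linear_density_wellorder:
  fixes f :: "real^'n::{finite,wellorder} \<Rightarrow> real^'n::_"
  assumes lf: "linear f" and "inj f"
  shows "lborel = density (distr lborel borel f) (\<lambda>_. ennreal \<bar>det (matrix f)\<bar>)"
proof (rule lborel_eqI)
  obtain h where lh: "linear h" and hf: "\<And>x. h (f x) = x" and fh: "\<And>x. f (h x) = x"
    using lf \<open>inj f\<close> linear_injective_isomorphism by metis
  have fm: "f \<in> borel_measurable borel"
    using lf by (rule linear_borel_measurable)
  have det_inverse: "\<bar>det (matrix f)\<bar> * \<bar>det (matrix h)\<bar> = 1"
  proof -
    have "matrix f ** matrix h = matrix (f \<circ> h)"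
      using matrix_compose[OF lh lf] by simp
    also have "f \<circ> h = id" using fh by auto
    finally show ?thesis
      by (metis abs_1 abs_mult det_I det_mul matrix_id_mat_1)
  qed
  fix l u :: "(real, 'n) vec"
  assume le: "\<And>b. b \<in> Basis \<Longrightarrow> l \<bullet> b \<le> u \<bullet> b"
  have pre: "f -` box l u = h ` box l u"
  proof
    show "f -` box l u \<subseteq> h ` box l u"
      using hf by (metis image_eqI subsetI vimageE)
    show "h ` box l u \<subseteq> f -` box l u"
      using fh by auto
  qed
  have "h ` box l u \<in> sets borel"
    using measurable_sets_borel[OF fm, of "box l u"] by (simp add: pre)
  then have "emeasure lborel (h ` box l u) = emeasure lebesgue (h ` box l u)"
    by (simp add: emeasure_completion)
  also have "\<dots> = ennreal (\<bar>det (matrix h)\<bar> * measure lebesgue (box l u))"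
    using measurable_linear_image[OF lh] measure_linear_image[OF lh, of "box l u"]
    by (simp add: emeasure_eq_measure2)
  finally have eh: "emeasure lborel (h ` box l u) = ennreal (\<bar>det (matrix h)\<bar> * measure lebesgue (box l u))" .
  have "emeasure (density (distr lborel borel f) (\<lambda>_. ennreal \<bar>det (matrix f)\<bar>)) (box l u)
      = ennreal \<bar>det (matrix f)\<bar> * emeasure lborel (f -` box l u)"
    using fm by (simp add: emeasure_density emeasure_distr nn_integral_cmult_indicator)
  also have "\<dots> = ennreal (measure lebesgue (box l u))"
    unfolding pre eh by (simp add: ennreal_mult[symmetric] det_inverse mult.assoc[symmetric])
  also have "\<dots> = (\<Prod>b\<in>Basis. (u - l) \<bullet> b)"
    using le by (simp add: emeasure_eq_measure2[symmetric] emeasure_completion emeasure_lborel_box_eq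
        inner_diff_left)
  finally show "emeasure (density (distr lborel borel f) (\<lambda>_. ennreal \<bar>det (matrix f)\<bar>)) (box l u)
      = (\<Prod>b\<in>Basis. (u - l) \<bullet> b)" .
qed simp

text \<open>The same for every finite index type, with some positive constant in place of
  \<open>|det|\<close> (its value is never needed: it is fixed later by normalisation).\<close>

lemma lborel_linear_density:
  fixes f :: "real^'n::finite \<Rightarrow> real^'n"
  assumes lf: "linear f" and "inj f"
  obtains c :: real where "c > 0" and "lborel = density (distr lborel borel f) (\<lambda>_. ennreal c)"
proof -
  obtain \<pi> :: "'n index \<Rightarrow> 'n" where \<pi>: "bij \<pi>"
    using finite_same_card_bij[of "UNIV :: 'n index set" "UNIV :: 'n set"] by (auto simp: card_index)
  define P where "P x = (\<chi> j. x $ \<pi> j)" for x :: "real^'n"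
  define Q where "Q y = (\<chi> i. y $ inv \<pi> i)" for y :: "real^'n index"
  have QP: "Q (P x) = x" for x
    using \<pi> by (simp add: P_def Q_def surj_f_inv_f bij_is_surj vec_eq_iff)
  have PQ: "P (Q y) = y" for y
    using \<pi> by (simp add: P_def Q_def inv_f_f bij_is_inj vec_eq_iff)
  have lin: "linear P" "linear Q"
    by (auto intro!: linearI simp: P_def Q_def vec_eq_iff)
  note [measurable] = lin[THEN linear_borel_measurable] linear_borel_measurable[OF lf]
  have distr_Q: "distr lborel borel Q = lborel"
    unfolding Q_def using \<pi> by (auto intro!: lborel_reindex bij_imp_bij_inv)
  define g where "g = P \<circ> f \<circ> Q"
  have "linear g" "inj g"
    using lf \<open>inj f\<close> lin QP PQ unfolding g_def
    by (auto intro!: linear_compose inj_compose intro: inj_on_inverseI)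
  define c where "c = \<bar>det (matrix g)\<bar>"
  have "c > 0"
    using det_nz_iff_inj[OF \<open>linear g\<close>] \<open>inj g\<close> by (simp add: c_def)
  have [measurable]: "g \<in> borel_measurable borel"
    using \<open>linear g\<close> by (rule linear_borel_measurable)
  have "Q \<circ> g = f \<circ> Q"
    by (simp add: g_def fun_eq_iff QP)
  have "(lborel :: (real^'n) measure) = distr lborel borel Q"
    by (simp add: distr_Q)
  also have "\<dots> = distr (density (distr lborel borel g) (\<lambda>_. ennreal c)) borel Q"
    by (simp only: c_def lborel_linear_density_wellorder[OF \<open>linear g\<close> \<open>inj g\<close>, symmetric])
  also have "\<dots> = density (distr (distr lborel borel g) borel Q) (\<lambda>_. ennreal c)"
    by (rule density_distr[symmetric]) auto
  also have "\<dots> = density (distr lborel borel (f \<circ> Q)) (\<lambda>_. ennreal c)"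
    by (simp add: distr_distr \<open>Q \<circ> g = f \<circ> Q\<close>)
  also have "\<dots> = density (distr lborel borel f) (\<lambda>_. ennreal c)"
    using distr_distr[of f borel borel Q lborel] by (simp add: distr_Q)
  finally show ?thesis
    using \<open>c > 0\<close> that by blast
qed

lemma lborel_integral_linear:
  fixes f :: "real^'n \<Rightarrow> real^'n"
  assumes lf: "linear f" and "inj f"
  shows "\<exists>c::real. c > 0 \<and> (\<forall>F \<in> borel_measurable borel.
           (integrable lborel F \<longleftrightarrow> integrable lborel (\<lambda>z. c * F (f z)))
           \<and> integral\<^sup>L lborel F = (\<integral>z. c * F (f z) \<partial>lborel))"
proof -
  obtain c where "c > 0" and D: "lborel = density (distr lborel borel f) (\<lambda>_. ennreal c)"
    using lborel_linear_density[OF assms] by blast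
  have fm[measurable]: "f \<in> lborel \<rightarrow>\<^sub>M borel"
    using linear_borel_measurable[OF lf] by simp
  have "\<forall>F \<in> borel_measurable borel.
           (integrable lborel F \<longleftrightarrow> integrable lborel (\<lambda>z. c * F (f z)))
           \<and> integral\<^sup>L lborel F = (\<integral>z. c * F (f z) \<partial>lborel)"
  proof (intro ballI conjI)
    fix F :: "real^'n \<Rightarrow> real"
    assume Fm[measurable]: "F \<in> borel_measurable borel"
    have "integrable lborel F \<longleftrightarrow> integrable (distr lborel borel f) (\<lambda>x. c *\<^sub>R F x)"
      using \<open>c > 0\<close> by (subst D) (rule integrable_density, auto)
    also have "\<dots> \<longleftrightarrow> integrable lborel (\<lambda>z. c * F (f z))"
      by (subst integrable_distr_eq[OF fm]) auto
    finally show "integrable lborel F \<longleftrightarrow> integrable lborel (\<lambda>z. c * F (f z))" .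
    have "integral\<^sup>L lborel F = integral\<^sup>L (distr lborel borel f) (\<lambda>x. c *\<^sub>R F x)"
      using \<open>c > 0\<close> by (subst D) (rule integral_density, auto)
    also have "\<dots> = (\<integral>z. c * F (f z) \<partial>lborel)"
      by (subst integral_distr[OF fm]) auto
    finally show "integral\<^sup>L lborel F = (\<integral>z. c * F (f z) \<partial>lborel)" .
  qed
  then show ?thesis
    using \<open>c > 0\<close> by blast
qed

subsection \<open>The standard Gaussian vector and its moments\<close>

lemma integral_lborel_prod:
  fixes f :: "'a::euclidean_space \<Rightarrow> real \<Rightarrow> real"
  assumes int: "\<And>b. b \<in> Basis \<Longrightarrow> integrable lborel (f b)"
  shows "integrable lborel (\<lambda>x. \<Prod>b\<in>Basis. f b (x \<bullet> b))"
    and "(\<integral>x. (\<Prod>b\<in>Basis. f b (x \<bullet> b)) \<partial>lborel) = (\<Prod>b\<in>Basis. integral\<^sup>L lborel (f b))"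
proof -
  have [measurable]: "f b \<in> borel_measurable borel" if "b \<in> Basis" for b
    using int[OF that] by auto
  interpret product_sigma_finite "\<lambda>_::'a. lborel :: real measure"
    by (simp add: product_sigma_finite_def lborel.sigma_finite_measure_axioms)
  let ?T = "\<lambda>g. \<Sum>b\<in>Basis. g b *\<^sub>R b :: 'a"
  have T[measurable]: "?T \<in> measurable (\<Pi>\<^sub>M b\<in>Basis. lborel) borel"
    by measurable
  have eq: "(\<Prod>b\<in>Basis. f b (?T g \<bullet> b)) = (\<Prod>b\<in>Basis. f b (g b))" for g
    by (intro prod.cong refl) (simp add: inner_sum_left inner_Basis if_distrib sum.delta cong: if_cong)
  have fm: "(\<lambda>x. \<Prod>b\<in>Basis. f b (x \<bullet> b)) \<in> borel_measurable borel"
    by measurable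
  have i1: "integrable (\<Pi>\<^sub>M b\<in>Basis. lborel) (\<lambda>g. \<Prod>b\<in>Basis. f b (g b))"
    by (rule product_integrable_prod) (auto intro: int)
  show "integrable lborel (\<lambda>x. \<Prod>b\<in>Basis. f b (x \<bullet> b))"
    using i1 by (subst lborel_eq, subst integrable_distr_eq[OF T fm]) (simp add: eq)
  show "(\<integral>x. (\<Prod>b\<in>Basis. f b (x \<bullet> b)) \<partial>lborel) = (\<Prod>b\<in>Basis. integral\<^sup>L lborel (f b))"
    using product_integral_prod[of Basis f] int
    by (subst lborel_eq, subst integral_distr[OF T fm]) (simp add: eq o_def)
qed

lemma integral_lborel_vec_prod:
  fixes g :: "'n::finite \<Rightarrow> real \<Rightarrow> real"
  assumes int: "\<And>i. integrable lborel (g i)"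
  shows "integrable lborel (\<lambda>x::real^'n. \<Prod>i\<in>UNIV. g i (x $ i))"
    and "(\<integral>x. (\<Prod>i\<in>UNIV. g i (x $ i)) \<partial>(lborel :: (real^'n) measure))
           = (\<Prod>i\<in>UNIV. integral\<^sup>L lborel (g i))"
proof -
  define f where "f b = g (SOME i. b = axis i (1::real))" for b :: "real^'n"
  have fa: "f (axis i 1) = g i" for i
    unfolding f_def by (rule arg_cong[where f=g]) (auto simp: axis_eq_axis)
  have intf: "integrable lborel (f b)" if "b \<in> Basis" for b
    using that int by (auto simp: Basis_vec_axis fa)
  have e1: "(\<Prod>b\<in>Basis. f b (x \<bullet> b)) = (\<Prod>i\<in>UNIV. g i (x $ i))" for x :: "real^'n"
    by (simp add: prod_Basis_vec fa inner_axis)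
  have e2: "(\<Prod>b\<in>(Basis::(real^'n) set). integral\<^sup>L lborel (f b)) = (\<Prod>i\<in>UNIV. integral\<^sup>L lborel (g i))"
    by (simp add: prod_Basis_vec fa)
  show "integrable lborel (\<lambda>x::real^'n. \<Prod>i\<in>UNIV. g i (x $ i))"
    using integral_lborel_prod(1)[of f, OF intf] by (simp add: e1)
  show "(\<integral>x. (\<Prod>i\<in>UNIV. g i (x $ i)) \<partial>(lborel :: (real^'n) measure)) = (\<Prod>i\<in>UNIV. integral\<^sup>L lborel (g i))"
    using integral_lborel_prod(2)[of f, OF intf] by (simp add: e1 e2)
qed

definition std_gauss :: "real^'n \<Rightarrow> real" where
  "std_gauss z = (\<Prod>i\<in>UNIV. std_normal_density (z $ i))"

definition normal_moment :: "nat \<Rightarrow> real" where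
  "normal_moment k = integral\<^sup>L lborel (\<lambda>t. std_normal_density t * t ^ k)"

lemma std_gauss_formula:
  "std_gauss (z::real^'n) = (1 / sqrt (2 * pi)) ^ CARD('n) * exp (- (z \<bullet> z) / 2)"
proof -
  have "std_gauss z = (\<Prod>i\<in>UNIV. (1 / sqrt (2 * pi)) * exp (- (z $ i)\<^sup>2 / 2))"
    by (simp add: std_gauss_def std_normal_density_def)
  also have "\<dots> = (1 / sqrt (2 * pi)) ^ CARD('n) * exp (\<Sum>i\<in>UNIV. - (z $ i)\<^sup>2 / 2)"
    by (simp only: prod.distrib prod_constant) (simp add: exp_sum)
  also have "(\<Sum>i\<in>UNIV. - (z $ i)\<^sup>2 / 2) = - (z \<bullet> z) / 2"
    by (simp add: inner_vec_def power2_eq_square sum_divide_distrib sum_negf)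
  finally show ?thesis .
qed

lemma std_gauss_monomial:
  fixes k :: "'n::finite \<Rightarrow> nat"
  shows "integrable lborel (\<lambda>z::real^'n. std_gauss z * (\<Prod>i\<in>UNIV. (z $ i) ^ k i))"
    and "(\<integral>z. std_gauss z * (\<Prod>i\<in>UNIV. (z $ i) ^ k i) \<partial>(lborel::(real^'n) measure))
           = (\<Prod>i\<in>UNIV. normal_moment (k i))"
proof -
  have e: "std_gauss z * (\<Prod>i\<in>UNIV. (z $ i) ^ k i)
      = (\<Prod>i\<in>UNIV. (\<lambda>t. std_normal_density t * t ^ k i) (z $ i))" for z :: "real^'n"
    by (simp add: std_gauss_def prod.distrib)
  show "integrable lborel (\<lambda>z::real^'n. std_gauss z * (\<Prod>i\<in>UNIV. (z $ i) ^ k i))"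
    unfolding e by (rule integral_lborel_vec_prod(1)) (rule integrable_std_normal_moment)
  show "(\<integral>z. std_gauss z * (\<Prod>i\<in>UNIV. (z $ i) ^ k i) \<partial>(lborel::(real^'n) measure))
      = (\<Prod>i\<in>UNIV. normal_moment (k i))"
    unfolding e
    by (subst integral_lborel_vec_prod(2)) (auto simp: normal_moment_def integrable_std_normal_moment)
qed

lemma normal_moment_values:
  "normal_moment 0 = 1" "normal_moment 1 = 0" "normal_moment 2 = 1"
  "normal_moment 3 = 0" "normal_moment 4 = 3"
proof -
  show "normal_moment 0 = 1"
    using integral_std_normal_moment_even[of 0] by (simp add: normal_moment_def)
  show "normal_moment 1 = 0"
    using integral_std_normal_moment_odd[of 0] by (simp add: normal_moment_def)
  show "normal_moment 2 = 1"
    using integral_std_normal_moment_even[of 1] by (simp add: normal_moment_def)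
  show "normal_moment 3 = 0"
    using integral_std_normal_moment_odd[of 1] by (simp add: normal_moment_def numeral_3_eq_3)
  have "normal_moment (2 * 2) = fact (2 * 2) / (2 ^ 2 * fact 2)"
    using integral_std_normal_moment_even[of 2] by (simp add: normal_moment_def)
  then show "normal_moment 4 = 3"
    by (simp add: fact_numeral)
qed

lemma normal_moment_Suc:
  "normal_moment (Suc 0) = 0" "normal_moment (Suc (Suc 0)) = 1"
  "normal_moment (Suc (Suc (Suc 0))) = 0" "normal_moment (Suc (Suc (Suc (Suc 0)))) = 3"
  using normal_moment_values by (simp_all add: eval_nat_numeral)

lemma prod_coordinate_power: "(\<Prod>i\<in>UNIV. (z $ i :: real) ^ (if i = a then 1 else 0)) = z $ a"
proof -
  have "(z $ i) ^ (if i = a then 1 else 0) = (if i = a then z $ i else 1)" for i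
    by simp
  then show ?thesis
    by (simp add: prod.delta)
qed

lemma monomial2:
  "(\<Prod>i\<in>UNIV. (z $ i :: real) ^ ((if i = a then 1 else 0) + (if i = b then 1 else 0)))
    = z $ a * z $ b"
  by (simp add: power_add prod.distrib prod_coordinate_power del: power.simps)

lemma monomial4:
  "(\<Prod>i\<in>UNIV. (z $ i :: real) ^ ((if i = a then 1 else 0) + (if i = b then 1 else 0)
      + (if i = c then 1 else 0) + (if i = d then 1 else 0))) = z $ a * z $ b * z $ c * z $ d"
  by (simp add: power_add prod.distrib prod_coordinate_power del: power.simps)

lemma prod_UNIV_support:
  fixes h :: "'n::finite \<Rightarrow> real"
  assumes "\<And>i. i \<notin> S \<Longrightarrow> h i = 1"
  shows "(\<Prod>i\<in>UNIV. h i) = (\<Prod>i\<in>S. h i)"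
  using assms by (intro prod.mono_neutral_right) auto

lemma std_gauss_moment2:
  fixes a b :: "'n::finite"
  shows "integrable lborel (\<lambda>z::real^'n. std_gauss z * (z $ a * z $ b))"
    and "(\<integral>z. std_gauss z * (z $ a * z $ b) \<partial>(lborel::(real^'n) measure)) = (if a = b then 1 else 0)"
proof -
  let ?k = "\<lambda>i. (if i = a then 1 else 0) + (if i = b then (1::nat) else 0)"
  show "integrable lborel (\<lambda>z::real^'n. std_gauss z * (z $ a * z $ b))"
    using std_gauss_monomial(1)[of ?k] by (simp only: monomial2)
  have "(\<integral>z. std_gauss z * (z $ a * z $ b) \<partial>(lborel::(real^'n) measure))
      = (\<Prod>i\<in>UNIV. normal_moment (?k i))"
    using std_gauss_monomial(2)[of ?k] by (simp only: monomial2)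
  also have "\<dots> = (\<Prod>i\<in>{a,b}. normal_moment (?k i))"
    by (rule prod_UNIV_support) (auto simp: normal_moment_values(1))
  also have "\<dots> = (if a = b then 1 else 0)"
    by (cases "a = b") (simp_all add: normal_moment_Suc)
  finally show "(\<integral>z. std_gauss z * (z $ a * z $ b) \<partial>(lborel::(real^'n) measure))
      = (if a = b then 1 else 0)" .
qed

definition pairings :: "'n \<Rightarrow> 'n \<Rightarrow> 'n \<Rightarrow> 'n \<Rightarrow> real" where
  "pairings a b c d = (if a = b \<and> c = d then 1 else 0) + (if a = c \<and> b = d then 1 else 0)
     + (if a = d \<and> b = c then 1 else 0)"

lemma std_gauss_moment4:
  fixes a b c d :: "'n::finite"
  shows "integrable lborel (\<lambda>z::real^'n. std_gauss z * (z $ a * z $ b * z $ c * z $ d))"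
    and "(\<integral>z. std_gauss z * (z $ a * z $ b * z $ c * z $ d) \<partial>(lborel::(real^'n) measure))
           = pairings a b c d"
proof -
  let ?k = "\<lambda>i. (if i = a then 1 else 0) + (if i = b then 1 else 0) + (if i = c then 1 else 0)
    + (if i = d then (1::nat) else 0)"
  show "integrable lborel (\<lambda>z::real^'n. std_gauss z * (z $ a * z $ b * z $ c * z $ d))"
    using std_gauss_monomial(1)[of ?k] by (simp only: monomial4)
  have "(\<integral>z. std_gauss z * (z $ a * z $ b * z $ c * z $ d) \<partial>(lborel::(real^'n) measure))
      = (\<Prod>i\<in>UNIV. normal_moment (?k i))"
    using std_gauss_monomial(2)[of ?k] by (simp only: monomial4)
  also have "\<dots> = (\<Prod>i\<in>{a,b,c,d}. normal_moment (?k i))"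
    by (rule prod_UNIV_support) (auto simp: normal_moment_values(1))
  also have "\<dots> = pairings a b c d"
    by (cases "a = b"; cases "a = c"; cases "a = d"; cases "b = c"; cases "b = d"; cases "c = d")
       (simp_all add: normal_moment_Suc pairings_def insert_commute)
  finally show "(\<integral>z. std_gauss z * (z $ a * z $ b * z $ c * z $ d) \<partial>(lborel::(real^'n) measure))
      = pairings a b c d" .
qed

subsection \<open>Moments of the centred Gaussian \<open>N(0, \<Sigma>)\<close>\<close>

text \<open>Standardisation up to a constant: if \<open>Y\<close> has density \<open>mvn_density \<Sigma>\<close> and
  \<open>N\<^sup>T \<Sigma>\<^sup>-\<^sup>1 N = I\<close>, the substitution \<open>x = N z\<close> turns the density of \<open>Y\<close> into a multiple
  \<open>K \<phi>(z)\<close> of the standard Gaussian density \<open>\<phi>\<close>.\<close>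

lemma mvn_expectation_scaled:
  fixes Sig N :: "real^'p^'p" and Y :: "'a \<Rightarrow> real^'p"
  assumes dY: "distributed M lborel Y (mvn_density Sig)"
    and NA: "transpose N ** matrix_inv Sig ** N = mat 1"
  shows "\<exists>K::real. \<forall>h \<in> borel_measurable borel.
           integrable lborel (\<lambda>z. std_gauss z * h (N *v z)) \<longrightarrow>
           integrable M (\<lambda>\<omega>. h (Y \<omega>))
           \<and> integral\<^sup>L M (\<lambda>\<omega>. h (Y \<omega>)) = K * (\<integral>z. std_gauss z * h (N *v z) \<partial>lborel)"
proof -
  define A where "A = matrix_inv Sig"
  define m0 where "m0 = (2 * pi) powr (- real CARD('p) / 2) * det Sig powr (-1/2)"
  define dens where "dens x = m0 * exp (- (x \<bullet> (A *v x)) / 2)" for x :: "real^'p"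
  have dens_nonneg: "dens x \<ge> 0" for x
    by (simp add: dens_def m0_def)
  have "mvn_density Sig = (\<lambda>x. ennreal (dens x))"
    by (simp add: fun_eq_iff mvn_density_def dens_def m0_def A_def)
  then have dY': "distributed M lborel Y (\<lambda>x. ennreal (dens x))"
    using dY by simp
  have [measurable]: "dens \<in> borel_measurable borel"
    using distributed_real_measurable[OF _ dY'] dens_nonneg by simp
  have inj_N: "inj (\<lambda>z. N *v z)"
  proof (rule inj_on_inverseI)
    show "(transpose N ** A) *v (N *v z) = z" for z
      using NA by (simp add: A_def matrix_vector_mul_assoc matrix_mul_assoc)
  qed
  obtain c :: real where cv: "\<forall>F \<in> borel_measurable borel.
           (integrable lborel F \<longleftrightarrow> integrable lborel (\<lambda>z. c * F (N *v z)))
           \<and> integral\<^sup>L lborel F = (\<integral>z. c * F (N *v z) \<partial>lborel)"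
    using lborel_integral_linear[OF matrix_vector_mul_linear inj_N] by blast
  define K where "K = c * m0 / (1 / sqrt (2 * pi)) ^ CARD('p)"
  have dens_N: "c * dens (N *v z) = K * std_gauss z" for z
    using quadratic_form_congruence[OF NA[folded A_def], of z]
    by (simp add: dens_def K_def std_gauss_formula)
  show ?thesis
  proof (rule exI[where x = K], intro ballI impI)
    fix h :: "real^'p \<Rightarrow> real"
    assume hm[measurable]: "h \<in> borel_measurable borel"
      and hi: "integrable lborel (\<lambda>z. std_gauss z * h (N *v z))"
    have Fm: "(\<lambda>x. dens x * h x) \<in> borel_measurable borel" by measurable
    have hm': "h \<in> borel_measurable lborel" using hm by simp
    have eqf: "(\<lambda>z. c * (dens (N *v z) * h (N *v z))) = (\<lambda>z. K * (std_gauss z * h (N *v z)))"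
      by (simp add: fun_eq_iff dens_N[symmetric] mult.assoc)
    have "integrable lborel (\<lambda>x. dens x * h x)"
      using cv[rule_format, OF Fm, THEN conjunct1] hi by (simp add: eqf)
    then have "integrable M (\<lambda>\<omega>. h (Y \<omega>))"
      using distributed_integrable[OF dY' hm'] dens_nonneg by simp
    moreover have "integral\<^sup>L M (\<lambda>\<omega>. h (Y \<omega>)) = (\<integral>x. dens x * h x \<partial>lborel)"
      using distributed_integral[OF dY' hm'] dens_nonneg by simp
    moreover have "\<dots> = K * (\<integral>z. std_gauss z * h (N *v z) \<partial>lborel)"
      by (simp add: cv[rule_format, OF Fm, THEN conjunct2] eqf)
    ultimately show "integrable M (\<lambda>\<omega>. h (Y \<omega>))
        \<and> integral\<^sup>L M (\<lambda>\<omega>. h (Y \<omega>)) = K * (\<integral>z. std_gauss z * h (N *v z) \<partial>lborel)"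
      by simp
  qed
qed

text \<open>Both densities integrate to one, so the constant is \<open>1\<close>:
  \<open>E g(Y) = \<integral> \<phi>(z) g(N z) dz\<close>.\<close>

lemma mvn_expectation:
  fixes Sig N :: "real^'p^'p" and Y :: "'a \<Rightarrow> real^'p" and g :: "real^'p \<Rightarrow> real"
  assumes ps: "prob_space M"
    and dY: "distributed M lborel Y (mvn_density Sig)"
    and NA: "transpose N ** matrix_inv Sig ** N = mat 1"
    and gm: "g \<in> borel_measurable borel"
    and gi: "integrable lborel (\<lambda>z. std_gauss z * g (N *v z))"
  shows "integrable M (\<lambda>\<omega>. g (Y \<omega>))"
    and "prob_space.expectation M (\<lambda>\<omega>. g (Y \<omega>)) = (\<integral>z. std_gauss z * g (N *v z) \<partial>lborel)"
proof -
  obtain K :: real where K: "\<forall>h \<in> borel_measurable borel.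
           integrable lborel (\<lambda>z. std_gauss z * h (N *v z)) \<longrightarrow>
           integrable M (\<lambda>\<omega>. h (Y \<omega>))
           \<and> integral\<^sup>L M (\<lambda>\<omega>. h (Y \<omega>)) = K * (\<integral>z. std_gauss z * h (N *v z) \<partial>lborel)"
    using mvn_expectation_scaled[OF dY NA] by blast
  have total: "integrable lborel (\<lambda>z::real^'p. std_gauss z * 1)"
    "(\<integral>z. std_gauss z * 1 \<partial>(lborel::(real^'p) measure)) = 1"
    using std_gauss_monomial[of "\<lambda>_. 0"] by (simp_all add: normal_moment_values)
  have "K = 1"
    using K[rule_format, of "\<lambda>_. 1"] total prob_space.prob_space[OF ps] by simp
  then show "integrable M (\<lambda>\<omega>. g (Y \<omega>))"
    and "prob_space.expectation M (\<lambda>\<omega>. g (Y \<omega>)) = (\<integral>z. std_gauss z * g (N *v z) \<partial>lborel)"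
    using K[rule_format, OF gm gi] by simp_all
qed

lemma mult_transpose_entry: "(N ** transpose N) $ a $ b = (\<Sum>e\<in>UNIV. N $ a $ e * N $ b $ e)"
  by (simp add: matrix_matrix_mult_def transpose_def)

lemma sum4_pairings:
  fixes w :: "'n::finite \<Rightarrow> 'n \<Rightarrow> 'n \<Rightarrow> 'n \<Rightarrow> real"
  shows "(\<Sum>e\<in>UNIV. \<Sum>f\<in>UNIV. \<Sum>g\<in>UNIV. \<Sum>h\<in>UNIV. w e f g h * pairings e f g h)
    = (\<Sum>e\<in>UNIV. \<Sum>g\<in>UNIV. w e e g g) + (\<Sum>e\<in>UNIV. \<Sum>f\<in>UNIV. w e f e f)
      + (\<Sum>e\<in>UNIV. \<Sum>f\<in>UNIV. w e f f e)"
proof -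
  have "w e f g h * pairings e f g h
      = (if h = g then (if f = e then w e f g h else 0) else 0)
        + (if h = f then (if g = e then w e f g h else 0) else 0)
        + (if h = e then (if g = f then w e f g h else 0) else 0)" for e f g h
    by (auto simp: pairings_def)
  moreover have "(\<Sum>x\<in>A. if P then F x else 0) = (if P then sum F A else (0::real))"
    for P and F :: "'n \<Rightarrow> real" and A
    by simp
  ultimately show ?thesis
    by (simp add: sum.distrib sum.delta cong: if_cong)
qed

context
  fixes M :: "'a measure" and Sig :: "real^'p^'p" and Y :: "'a \<Rightarrow> real^'p"
  assumes ps: "prob_space M" and sp: "sym_posdef Sig"
    and dY: "distributed M lborel Y (mvn_density Sig)"
begin

lemma mvn_moment2:
  shows "integrable M (\<lambda>\<omega>. Y \<omega> $ a * Y \<omega> $ b)"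
    and "prob_space.expectation M (\<lambda>\<omega>. Y \<omega> $ a * Y \<omega> $ b) = Sig $ a $ b"
proof -
  obtain N :: "real^'p^'p" where NA: "transpose N ** matrix_inv Sig ** N = mat 1"
    and NS: "N ** transpose N = Sig"
    using sym_posdef_factor[OF sp] by blast
  let ?g = "\<lambda>x::real^'p. x $ a * x $ b"
  have gm: "?g \<in> borel_measurable borel" by measurable
  have e: "std_gauss z * ?g (N *v z)
      = (\<Sum>c\<in>UNIV. \<Sum>d\<in>UNIV. (N $ a $ c * N $ b $ d) * (std_gauss z * (z $ c * z $ d)))" for z
    by (simp add: matrix_vector_mult_def sum_distrib_left sum_distrib_right mult_ac)
       (subst sum.swap, simp add: mult_ac)
  have gi: "integrable lborel (\<lambda>z. std_gauss z * ?g (N *v z))"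
    unfolding e by (auto intro!: integrable_sum integrable_mult_right std_gauss_moment2(1))
  have "prob_space.expectation M (\<lambda>\<omega>. ?g (Y \<omega>)) = (\<integral>z. std_gauss z * ?g (N *v z) \<partial>lborel)"
    by (rule mvn_expectation(2)[OF ps dY NA gm gi])
  also have "\<dots> = (\<Sum>c\<in>UNIV. \<Sum>d\<in>UNIV. (N $ a $ c * N $ b $ d) * (if c = d then 1 else 0))"
    unfolding e by (simp add: integral_sum integrable_sum std_gauss_moment2)
  also have "\<dots> = Sig $ a $ b"
    by (simp add: NS[symmetric] mult_transpose_entry if_distrib sum.delta cong: if_cong)
  finally show "prob_space.expectation M (\<lambda>\<omega>. Y \<omega> $ a * Y \<omega> $ b) = Sig $ a $ b" .
  show "integrable M (\<lambda>\<omega>. Y \<omega> $ a * Y \<omega> $ b)"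
    by (rule mvn_expectation(1)[OF ps dY NA gm gi])
qed

lemma mvn_moment4:
  shows "integrable M (\<lambda>\<omega>. Y \<omega> $ a * Y \<omega> $ b * Y \<omega> $ c * Y \<omega> $ d)"
    and "prob_space.expectation M (\<lambda>\<omega>. Y \<omega> $ a * Y \<omega> $ b * Y \<omega> $ c * Y \<omega> $ d)
       = Sig $ a $ b * Sig $ c $ d + Sig $ a $ c * Sig $ b $ d + Sig $ a $ d * Sig $ b $ c"
proof -
  obtain N :: "real^'p^'p" where NA: "transpose N ** matrix_inv Sig ** N = mat 1"
    and NS: "N ** transpose N = Sig"
    using sym_posdef_factor[OF sp] by blast
  let ?g = "\<lambda>x::real^'p. x $ a * x $ b * x $ c * x $ d"
  let ?w = "\<lambda>e f g h. N $ a $ e * N $ b $ f * N $ c $ g * N $ d $ h"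
  have gm: "?g \<in> borel_measurable borel" by measurable
  have e: "std_gauss z * ?g (N *v z) = (\<Sum>e\<in>UNIV. \<Sum>f\<in>UNIV. \<Sum>g\<in>UNIV. \<Sum>h\<in>UNIV.
      ?w e f g h * (std_gauss z * (z $ e * z $ f * z $ g * z $ h)))" for z
    by (simp add: matrix_vector_mult_def sum_distrib_left sum_distrib_right mult_ac)
       (rule trans[OF sum.swap], intro sum.cong refl, simp add: mult_ac)
  have gi: "integrable lborel (\<lambda>z. std_gauss z * ?g (N *v z))"
    unfolding e by (intro Bochner_Integration.integrable_sum integrable_mult_right std_gauss_moment4(1))
  have "prob_space.expectation M (\<lambda>\<omega>. ?g (Y \<omega>)) = (\<integral>z. std_gauss z * ?g (N *v z) \<partial>lborel)"
    by (rule mvn_expectation(2)[OF ps dY NA gm gi])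
  also have "\<dots> = (\<Sum>e\<in>UNIV. \<Sum>f\<in>UNIV. \<Sum>g\<in>UNIV. \<Sum>h\<in>UNIV. ?w e f g h * pairings e f g h)"
    unfolding e by (simp add: integral_sum integrable_sum std_gauss_moment4)
  also have "\<dots> = Sig $ a $ b * Sig $ c $ d + Sig $ a $ c * Sig $ b $ d + Sig $ a $ d * Sig $ b $ c"
    unfolding sum4_pairings NS[symmetric] mult_transpose_entry
    by (simp add: sum_distrib_left sum_distrib_right mult_ac)
       (subst (1 2 3) sum.swap, simp add: mult_ac)
  finally show "prob_space.expectation M (\<lambda>\<omega>. Y \<omega> $ a * Y \<omega> $ b * Y \<omega> $ c * Y \<omega> $ d)
       = Sig $ a $ b * Sig $ c $ d + Sig $ a $ c * Sig $ b $ d + Sig $ a $ d * Sig $ b $ c" .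
  show "integrable M (\<lambda>\<omega>. Y \<omega> $ a * Y \<omega> $ b * Y \<omega> $ c * Y \<omega> $ d)"
    by (rule mvn_expectation(1)[OF ps dY NA gm gi])
qed

end

subsection \<open>Moments of the sample covariance\<close>

lemma sample_cov_entry: "sample_cov n x $ a $ b = (\<Sum>i\<in>{1..n}. x i $ a * x i $ b) / real n"
  by (simp add: sample_cov_def outer_def)

lemma sample_cov_symmetric: "transpose (sample_cov n x) = sample_cov n x"
  by (simp add: vec_eq_iff transpose_def sample_cov_entry mult.commute)

lemma inner_matrix_entries: "A \<bullet> B = (\<Sum>a\<in>UNIV. \<Sum>b\<in>UNIV. A $ a $ b * B $ a $ b)"
  for A B :: "real^'n^'n"
  by (simp add: inner_vec_def)

lemma trace_square_entries: "(trace A)\<^sup>2 = (\<Sum>a\<in>UNIV. \<Sum>b\<in>UNIV. A $ a $ a * A $ b $ b)"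
  for A :: "real^'n^'n"
  by (simp add: trace_def power2_eq_square sum_product)

lemma integrable_sum_sum:
  fixes F :: "'i \<Rightarrow> 'j \<Rightarrow> 'a \<Rightarrow> real"
  assumes "\<And>i k. i \<in> A \<Longrightarrow> k \<in> B \<Longrightarrow> integrable M (F i k)"
  shows "integrable M (\<lambda>x. \<Sum>i\<in>A. \<Sum>k\<in>B. F i k x)"
  using assms by (intro Bochner_Integration.integrable_sum) auto

lemma integral_sum_sum:
  fixes F :: "'i \<Rightarrow> 'j \<Rightarrow> 'a \<Rightarrow> real"
  assumes "\<And>i k. i \<in> A \<Longrightarrow> k \<in> B \<Longrightarrow> integrable M (F i k)"
  shows "integral\<^sup>L M (\<lambda>x. \<Sum>i\<in>A. \<Sum>k\<in>B. F i k x) = (\<Sum>i\<in>A. \<Sum>k\<in>B. integral\<^sup>L M (F i k))"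
proof -
  have "integral\<^sup>L M (\<lambda>x. \<Sum>i\<in>A. \<Sum>k\<in>B. F i k x) = (\<Sum>i\<in>A. integral\<^sup>L M (\<lambda>x. \<Sum>k\<in>B. F i k x))"
    by (rule Bochner_Integration.integral_sum) (use assms in \<open>auto intro!: Bochner_Integration.integrable_sum\<close>)
  also have "\<dots> = (\<Sum>i\<in>A. \<Sum>k\<in>B. integral\<^sup>L M (F i k))"
    by (intro sum.cong refl Bochner_Integration.integral_sum) (use assms in auto)
  finally show ?thesis .
qed

context
  fixes M :: "'a measure" and Sig :: "real^'p^'p" and n :: nat and X :: "nat \<Rightarrow> 'a \<Rightarrow> real^'p"
  assumes ps: "prob_space M" and n1: "n \<ge> 1" and sp: "sym_posdef Sig"
    and ind: "prob_space.indep_vars M (\<lambda>_. borel) X {1..n}"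
    and dist: "\<And>i. i \<in> {1..n} \<Longrightarrow> distributed M lborel (X i) (mvn_density Sig)"
begin

text \<open>Fourth moments of the sample: Isserlis' theorem for \<open>i = k\<close>, independence otherwise.\<close>

lemma sample_product_moment:
  assumes i: "i \<in> {1..n}" and k: "k \<in> {1..n}"
  shows "integrable M (\<lambda>\<omega>. (X i \<omega> $ a * X i \<omega> $ b) * (X k \<omega> $ c * X k \<omega> $ d))"
    and "integral\<^sup>L M (\<lambda>\<omega>. (X i \<omega> $ a * X i \<omega> $ b) * (X k \<omega> $ c * X k \<omega> $ d))
       = Sig $ a $ b * Sig $ c $ d
         + (if i = k then Sig $ a $ c * Sig $ b $ d + Sig $ a $ d * Sig $ b $ c else 0)"
proof -
  interpret prob_space M by (rule ps)
  have "integrable M (\<lambda>\<omega>. (X i \<omega> $ a * X i \<omega> $ b) * (X k \<omega> $ c * X k \<omega> $ d)) \<and>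
    integral\<^sup>L M (\<lambda>\<omega>. (X i \<omega> $ a * X i \<omega> $ b) * (X k \<omega> $ c * X k \<omega> $ d))
       = Sig $ a $ b * Sig $ c $ d
         + (if i = k then Sig $ a $ c * Sig $ b $ d + Sig $ a $ d * Sig $ b $ c else 0)"
  proof (cases "i = k")
    case True
    then show ?thesis
      using mvn_moment4[OF ps sp dist[OF i], of a b c d] by (simp add: mult.assoc add.assoc)
  next
    case False
    define Y where "Y j x = (if j = i then x $ a * x $ b else x $ c * x $ d)" for j and x :: "real^'p"
    have Ym: "Y j \<in> borel_measurable borel" for j
      unfolding Y_def by measurable
    have ind2: "indep_vars (\<lambda>_. borel) (\<lambda>j \<omega>. Y j (X j \<omega>)) {i, k}"
      by (rule indep_vars_compose2[OF indep_vars_subset[OF ind]]) (use i k Ym in auto)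
    have intY: "integrable M (\<lambda>\<omega>. Y j (X j \<omega>))" if "j \<in> {i, k}" for j
      using that False mvn_moment2(1)[OF ps sp dist[OF i]] mvn_moment2(1)[OF ps sp dist[OF k]]
      by (auto simp: Y_def)
    have prod_Y: "(\<Prod>j\<in>{i,k}. Y j (X j \<omega>)) = (X i \<omega> $ a * X i \<omega> $ b) * (X k \<omega> $ c * X k \<omega> $ d)"
      for \<omega>
      using False by (simp add: Y_def)
    have "integrable M (\<lambda>\<omega>. (\<Prod>j\<in>{i,k}. Y j (X j \<omega>)))"
      by (rule indep_vars_integrable[OF _ ind2 intY]) auto
    moreover have "(\<integral>\<omega>. (\<Prod>j\<in>{i,k}. Y j (X j \<omega>)) \<partial>M) = (\<Prod>j\<in>{i,k}. \<integral>\<omega>. Y j (X j \<omega>) \<partial>M)"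
      by (rule indep_vars_lebesgue_integral[OF _ ind2 intY]) auto
    moreover have "\<dots> = Sig $ a $ b * Sig $ c $ d"
      using False mvn_moment2(2)[OF ps sp dist[OF i]] mvn_moment2(2)[OF ps sp dist[OF k]]
      by (simp add: Y_def)
    ultimately show ?thesis
      using False unfolding prod_Y by simp
  qed
  then show "integrable M (\<lambda>\<omega>. (X i \<omega> $ a * X i \<omega> $ b) * (X k \<omega> $ c * X k \<omega> $ d))"
    and "integral\<^sup>L M (\<lambda>\<omega>. (X i \<omega> $ a * X i \<omega> $ b) * (X k \<omega> $ c * X k \<omega> $ d))
       = Sig $ a $ b * Sig $ c $ d
         + (if i = k then Sig $ a $ c * Sig $ b $ d + Sig $ a $ d * Sig $ b $ c else 0)"
    by auto
qed

abbreviation Shat :: "'a \<Rightarrow> real^'p^'p" where "Shat \<omega> \<equiv> sample_cov n (\<lambda>i. X i \<omega>)"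

lemma sample_cov_mean:
  shows "integrable M (\<lambda>\<omega>. Shat \<omega> $ a $ b)" and "integral\<^sup>L M (\<lambda>\<omega>. Shat \<omega> $ a $ b) = Sig $ a $ b"
proof -
  have i: "integrable M (\<lambda>\<omega>. X i \<omega> $ a * X i \<omega> $ b)" if "i \<in> {1..n}" for i
    using mvn_moment2(1)[OF ps sp dist[OF that]] .
  show "integrable M (\<lambda>\<omega>. Shat \<omega> $ a $ b)"
    unfolding sample_cov_entry by (intro integrable_divide Bochner_Integration.integrable_sum i)
  have "integral\<^sup>L M (\<lambda>\<omega>. Shat \<omega> $ a $ b)
      = (\<Sum>i\<in>{1..n}. integral\<^sup>L M (\<lambda>\<omega>. X i \<omega> $ a * X i \<omega> $ b)) / real n"
    unfolding sample_cov_entry by (simp add: i)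
  also have "\<dots> = (\<Sum>i\<in>{1..n}. Sig $ a $ b) / real n"
    using mvn_moment2(2)[OF ps sp dist] by simp
  also have "\<dots> = Sig $ a $ b" using n1 by simp
  finally show "integral\<^sup>L M (\<lambda>\<omega>. Shat \<omega> $ a $ b) = Sig $ a $ b" .
qed

lemma sample_cov_second_moment:
  shows "integrable M (\<lambda>\<omega>. Shat \<omega> $ a $ b * Shat \<omega> $ c $ d)"
    and "integral\<^sup>L M (\<lambda>\<omega>. Shat \<omega> $ a $ b * Shat \<omega> $ c $ d)
       = Sig $ a $ b * Sig $ c $ d + (Sig $ a $ c * Sig $ b $ d + Sig $ a $ d * Sig $ b $ c) / real n"
proof -
  have e: "Shat \<omega> $ a $ b * Shat \<omega> $ c $ d = (\<Sum>i\<in>{1..n}. \<Sum>k\<in>{1..n}.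
      (X i \<omega> $ a * X i \<omega> $ b) * (X k \<omega> $ c * X k \<omega> $ d)) / (real n * real n)" for \<omega>
    by (simp add: sample_cov_entry sum_product)
  show "integrable M (\<lambda>\<omega>. Shat \<omega> $ a $ b * Shat \<omega> $ c $ d)"
    unfolding e by (intro integrable_divide integrable_sum_sum sample_product_moment(1))
  let ?c = "Sig $ a $ c * Sig $ b $ d + Sig $ a $ d * Sig $ b $ c"
  have "integral\<^sup>L M (\<lambda>\<omega>. Shat \<omega> $ a $ b * Shat \<omega> $ c $ d)
      = (\<Sum>i\<in>{1..n}. \<Sum>k\<in>{1..n}. integral\<^sup>L M (\<lambda>\<omega>. (X i \<omega> $ a * X i \<omega> $ b) * (X k \<omega> $ c * X k \<omega> $ d)))
        / (real n * real n)"
    unfolding e by (subst integral_sum_sum[symmetric]) (auto intro: sample_product_moment(1))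
  also have "\<dots> = (\<Sum>i\<in>{1..n}. \<Sum>k\<in>{1..n}. Sig $ a $ b * Sig $ c $ d + (if i = k then ?c else 0))
        / (real n * real n)"
    by (simp add: sample_product_moment(2))
  also have "\<dots> = Sig $ a $ b * Sig $ c $ d + ?c / real n"
    using n1 by (simp add: sum.distrib sum.delta field_simps)
  finally show "integral\<^sup>L M (\<lambda>\<omega>. Shat \<omega> $ a $ b * Shat \<omega> $ c $ d)
       = Sig $ a $ b * Sig $ c $ d + ?c / real n" .
qed

lemma Sig_symmetric: "Sig $ b $ a = Sig $ a $ b"
  using sp by (simp add: sym_posdef_def symmetric_entry)

lemma trace_Sig_square: "trace (Sig ** Sig) = Sig \<bullet> Sig"
  using sp by (simp add: sym_posdef_def trace_mult_symmetric)

lemma expectation_inner_sample_cov: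
  shows "integrable M (\<lambda>\<omega>. A \<bullet> Shat \<omega>)" and "integral\<^sup>L M (\<lambda>\<omega>. A \<bullet> Shat \<omega>) = A \<bullet> Sig"
  unfolding inner_matrix_entries
  by (auto intro!: integrable_sum_sum integrable_mult_right sample_cov_mean
      simp: integral_sum_sum sample_cov_mean)

lemma expectation_sample_cov_square:
  shows "integrable M (\<lambda>\<omega>. Shat \<omega> \<bullet> Shat \<omega>)"
    and "integral\<^sup>L M (\<lambda>\<omega>. Shat \<omega> \<bullet> Shat \<omega>)
       = trace (Sig ** Sig) + ((trace Sig)\<^sup>2 + trace (Sig ** Sig)) / real n"
proof -
  show "integrable M (\<lambda>\<omega>. Shat \<omega> \<bullet> Shat \<omega>)"
    unfolding inner_matrix_entries by (intro integrable_sum_sum sample_cov_second_moment(1))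
  have "integral\<^sup>L M (\<lambda>\<omega>. Shat \<omega> \<bullet> Shat \<omega>) = (\<Sum>a\<in>UNIV. \<Sum>b\<in>UNIV.
      Sig $ a $ b * Sig $ a $ b + (Sig $ a $ a * Sig $ b $ b + Sig $ a $ b * Sig $ a $ b) / real n)"
    unfolding inner_matrix_entries
    by (simp add: integral_sum_sum sample_cov_second_moment Sig_symmetric[of _ a for a])
  also have "\<dots> = trace (Sig ** Sig) + ((trace Sig)\<^sup>2 + trace (Sig ** Sig)) / real n"
    by (simp add: trace_Sig_square inner_matrix_entries trace_square_entries sum.distrib
        sum_divide_distrib add_divide_distrib)
  finally show "integral\<^sup>L M (\<lambda>\<omega>. Shat \<omega> \<bullet> Shat \<omega>)
       = trace (Sig ** Sig) + ((trace Sig)\<^sup>2 + trace (Sig ** Sig)) / real n" .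
qed

lemma expectation_trace_square:
  shows "integrable M (\<lambda>\<omega>. (trace (Shat \<omega>))\<^sup>2)"
    and "integral\<^sup>L M (\<lambda>\<omega>. (trace (Shat \<omega>))\<^sup>2) = (trace Sig)\<^sup>2 + 2 * trace (Sig ** Sig) / real n"
proof -
  show "integrable M (\<lambda>\<omega>. (trace (Shat \<omega>))\<^sup>2)"
    unfolding trace_square_entries by (intro integrable_sum_sum sample_cov_second_moment(1))
  have "integral\<^sup>L M (\<lambda>\<omega>. (trace (Shat \<omega>))\<^sup>2) = (\<Sum>a\<in>UNIV. \<Sum>b\<in>UNIV.
      Sig $ a $ a * Sig $ b $ b + (Sig $ a $ b * Sig $ a $ b + Sig $ a $ b * Sig $ a $ b) / real n)"
    unfolding trace_square_entries
    by (simp add: integral_sum_sum sample_cov_second_moment Sig_symmetric[of a b for a b])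
  also have "\<dots> = (trace Sig)\<^sup>2 + 2 * trace (Sig ** Sig) / real n"
    by (simp add: trace_Sig_square inner_matrix_entries trace_square_entries sum.distrib
        sum_divide_distrib sum_distrib_left)
  finally show "integral\<^sup>L M (\<lambda>\<omega>. (trace (Shat \<omega>))\<^sup>2) = (trace Sig)\<^sup>2 + 2 * trace (Sig ** Sig) / real n" .
qed


lemma expectation_trace_sample_cov:
  shows "integrable M (\<lambda>\<omega>. trace (Shat \<omega>))" and "integral\<^sup>L M (\<lambda>\<omega>. trace (Shat \<omega>)) = trace Sig"
  using expectation_inner_sample_cov[of "mat 1"] by (simp_all add: inner_mat_1)

lemma expectation_target_gap:
  shows "integrable M (\<lambda>\<omega>. frob_sq (Shat \<omega> - shrink_target (Shat \<omega>)))"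
    and "integral\<^sup>L M (\<lambda>\<omega>. frob_sq (Shat \<omega> - shrink_target (Shat \<omega>)))
       = ((real n + 1 - 2 / real CARD('p)) * trace (Sig ** Sig)
          + (1 - real n / real CARD('p)) * (trace Sig)\<^sup>2) / real n"
proof -
  let ?p = "real CARD('p)"
  note gap = frob_sq_minus_shrink_target[of "Shat \<omega>" for \<omega>]
  note SS = expectation_sample_cov_square
  note TT = expectation_trace_square
  show "integrable M (\<lambda>\<omega>. frob_sq (Shat \<omega> - shrink_target (Shat \<omega>)))"
    unfolding gap by (intro Bochner_Integration.integrable_diff integrable_divide SS(1) TT(1))
  have "integral\<^sup>L M (\<lambda>\<omega>. frob_sq (Shat \<omega> - shrink_target (Shat \<omega>)))
      = trace (Sig ** Sig) + ((trace Sig)\<^sup>2 + trace (Sig ** Sig)) / real n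
        - ((trace Sig)\<^sup>2 + 2 * trace (Sig ** Sig) / real n) / ?p"
    unfolding gap by (simp add: SS TT integrable_divide)
  also have "\<dots> = ((real n + 1 - 2 / ?p) * trace (Sig ** Sig) + (1 - real n / ?p) * (trace Sig)\<^sup>2) / real n"
    using n1 by (simp add: field_simps)
  finally show "integral\<^sup>L M (\<lambda>\<omega>. frob_sq (Shat \<omega> - shrink_target (Shat \<omega>)))
      = ((real n + 1 - 2 / ?p) * trace (Sig ** Sig) + (1 - real n / ?p) * (trace Sig)\<^sup>2) / real n" .
qed

lemma expectation_cross_term:
  shows "integrable M (\<lambda>\<omega>. trace ((Sig - Shat \<omega>) ** (shrink_target (Shat \<omega>) - Shat \<omega>)))"
    and "integral\<^sup>L M (\<lambda>\<omega>. trace ((Sig - Shat \<omega>) ** (shrink_target (Shat \<omega>) - Shat \<omega>)))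
       = ((1 - 2 / real CARD('p)) * trace (Sig ** Sig) + (trace Sig)\<^sup>2) / real n"
proof -
  let ?p = "real CARD('p)"
  note cross = trace_cross_shrink_target[OF sample_cov_symmetric, of Sig n "\<lambda>i. X i \<omega>" for \<omega>]
  note SS = expectation_sample_cov_square
  note TT = expectation_trace_square
  note IS = expectation_inner_sample_cov[of Sig]
  note TS = expectation_trace_sample_cov
  have I1: "integrable M (\<lambda>\<omega>. trace Sig * trace (Shat \<omega>) / ?p)"
    by (intro integrable_divide integrable_mult_right TS(1))
  have I2: "integrable M (\<lambda>\<omega>. (trace (Shat \<omega>))\<^sup>2 / ?p)"
    by (intro integrable_divide TT(1))
  show "integrable M (\<lambda>\<omega>. trace ((Sig - Shat \<omega>) ** (shrink_target (Shat \<omega>) - Shat \<omega>)))"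
    unfolding cross
    by (intro Bochner_Integration.integrable_add Bochner_Integration.integrable_diff I1 I2 IS(1) SS(1))
  have "integral\<^sup>L M (\<lambda>\<omega>. trace ((Sig - Shat \<omega>) ** (shrink_target (Shat \<omega>) - Shat \<omega>)))
      = trace Sig * trace Sig / ?p - trace (Sig ** Sig)
        - ((trace Sig)\<^sup>2 + 2 * trace (Sig ** Sig) / real n) / ?p
        + (trace (Sig ** Sig) + ((trace Sig)\<^sup>2 + trace (Sig ** Sig)) / real n)"
    unfolding cross
    by (simp add: Bochner_Integration.integral_add Bochner_Integration.integral_diff
        Bochner_Integration.integrable_diff I1 I2 IS SS TT TS trace_Sig_square)
  also have "\<dots> = ((1 - 2 / ?p) * trace (Sig ** Sig) + (trace Sig)\<^sup>2) / real n"
    using n1 by (simp add: field_simps power2_eq_square)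
  finally show "integral\<^sup>L M (\<lambda>\<omega>. trace ((Sig - Shat \<omega>) ** (shrink_target (Shat \<omega>) - Shat \<omega>)))
      = ((1 - 2 / ?p) * trace (Sig ** Sig) + (trace Sig)\<^sup>2) / real n" .
qed

lemma expected_risk_quadratic:
  "integral\<^sup>L M (\<lambda>\<omega>. frob_sq ((1 - r) *\<^sub>R Shat \<omega> + r *\<^sub>R shrink_target (Shat \<omega>) - Sig))
   = integral\<^sup>L M (\<lambda>\<omega>. frob_sq (Shat \<omega> - Sig))
     - 2 * r * integral\<^sup>L M (\<lambda>\<omega>. trace ((Sig - Shat \<omega>) ** (shrink_target (Shat \<omega>) - Shat \<omega>)))
     + r\<^sup>2 * integral\<^sup>L M (\<lambda>\<omega>. frob_sq (Shat \<omega> - shrink_target (Shat \<omega>)))"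
proof -
  have "frob_sq (Shat \<omega> - Sig) = Shat \<omega> \<bullet> Shat \<omega> - 2 * (Sig \<bullet> Shat \<omega>) + Sig \<bullet> Sig" for \<omega>
    by (simp add: frob_sq_inner inner_diff_left inner_diff_right inner_commute[of "Shat \<omega>" Sig])
  then have I: "integrable M (\<lambda>\<omega>. frob_sq (Shat \<omega> - Sig))"
    using ps by (simp add: Bochner_Integration.integrable_add Bochner_Integration.integrable_diff
        expectation_sample_cov_square(1)
        expectation_inner_sample_cov(1) prob_space.finite_measure
        finite_measure.integrable_const)
  show ?thesis
    unfolding shrinkage_loss_expansion[OF sample_cov_symmetric]
    by (simp add: I Bochner_Integration.integral_add Bochner_Integration.integral_diff
        Bochner_Integration.integrable_diff expectation_cross_term(1) expectation_target_gap(1))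
qed

end

subsection \<open>Positivity of the denominator\<close>

text \<open>A positive definite matrix has positive diagonal entries, hence positive trace.\<close>

lemma sym_posdef_trace_pos:
  fixes A :: "real^'n^'n"
  assumes "sym_posdef A"
  shows "trace A > 0"
proof -
  have "A $ i $ i > 0" for i
  proof -
    have "axis i 1 \<noteq> (0::real^'n)" by (simp add: axis_eq_0_iff)
    then have "axis i 1 \<bullet> (A *v axis i 1) > 0" using assms by (simp add: sym_posdef_def)
    then show ?thesis
      by (simp add: inner_axis' matrix_vector_mult_basis column_def)
  qed
  then show ?thesis
    unfolding trace_def by (intro sum_pos) auto
qed

text \<open>Cauchy--Schwarz: \<open>Tr\<^sup>2(A) \<le> p \<parallel>A\<parallel>\<^sup>2\<close>.\<close>

lemma trace_square_le:
  fixes A :: "real^'n^'n"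
  shows "(trace A)\<^sup>2 \<le> real CARD('n) * (A \<bullet> A)"
proof -
  have "(trace A)\<^sup>2 \<le> (\<Sum>a\<in>UNIV. (A $ a $ a)\<^sup>2) * real CARD('n)"
    unfolding trace_def by (rule sum_squared_le_sum_of_squares)
  also have "\<dots> \<le> (A \<bullet> A) * real CARD('n)"
  proof (rule mult_right_mono)
    show "(\<Sum>a\<in>UNIV. (A $ a $ a)\<^sup>2) \<le> A \<bullet> A"
      unfolding inner_matrix_entries
      by (intro sum_mono) (auto simp: power2_eq_square intro: member_le_sum)
  qed simp
  finally show ?thesis
    by (simp add: mult.commute)
qed

text \<open>An elementary inequality behind the positivity of the denominator: if
  \<open>t\<^sub>1\<^sup>2 \<le> p t\<^sub>2\<close>, the expression is at least \<open>(1 - 2/p) t\<^sub>2 + t\<^sub>1\<^sup>2 > 0\<close>.\<close>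

lemma shrinkage_denominator_pos:
  fixes p n t1 t2 :: real
  assumes "p \<ge> 2" and "n \<ge> 0" and "t1 \<noteq> 0" and "t1\<^sup>2 \<le> p * t2"
  shows "(n + 1 - 2 / p) * t2 + (1 - n / p) * t1\<^sup>2 > 0"
proof -
  have "p > 0" using assms by simp
  have "t2 \<ge> 0"
    using assms \<open>p > 0\<close> zero_le_power2[of t1] by (meson order_trans zero_le_mult_iff not_le)
  have "n / p * t1\<^sup>2 \<le> n / p * (p * t2)"
    using assms \<open>p > 0\<close> by (intro mult_left_mono) simp_all
  also have "\<dots> = n * t2"
    using \<open>p > 0\<close> by simp
  finally have "n / p * t1\<^sup>2 \<le> n * t2" .
  moreover have "2 / p \<le> 1"
    using assms by simp
  then have "(1 - 2 / p) * t2 \<ge> 0"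
    using \<open>t2 \<ge> 0\<close> by simp
  moreover have "t1\<^sup>2 > 0"
    using assms by simp
  moreover have "(n + 1 - 2 / p) * t2 + (1 - n / p) * t1\<^sup>2
      = (1 - 2 / p) * t2 + t1\<^sup>2 + (n * t2 - n / p * t1\<^sup>2)"
    by (simp add: algebra_simps)
  ultimately show ?thesis
    by linarith
qed

lemma sym_posdef_shrinkage_denominator_pos:
  fixes Sig :: "real^'p^'p"
  assumes "sym_posdef Sig" and "CARD('p) \<ge> 2"
  shows "(real n + 1 - 2 / real CARD('p)) * trace (Sig ** Sig)
    + (1 - real n / real CARD('p)) * (trace Sig)\<^sup>2 > 0"
proof (rule shrinkage_denominator_pos)
  show "(trace Sig)\<^sup>2 \<le> real CARD('p) * trace (Sig ** Sig)"
    using trace_square_le[of Sig] assms(1) by (simp add: sym_posdef_def trace_mult_symmetric)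
  show "trace Sig \<noteq> 0"
    using sym_posdef_trace_pos[OF assms(1)] by simp
qed (use assms(2) in auto)

theorem theorem1:
  fixes M :: "'a measure" and Sig :: "real^'p^'p" and n :: nat
    and X :: "nat \<Rightarrow> 'a \<Rightarrow> real^'p"
  assumes "prob_space M"
    and "CARD('p) \<ge> 2" and "n \<ge> 1"
    and "sym_posdef Sig"
    and "prob_space.indep_vars M (\<lambda>_. borel) X {1..n}"
    and "\<And>i. i \<in> {1..n} \<Longrightarrow> distributed M lborel (X i) (mvn_density Sig)"
  defines "R \<equiv> \<lambda>\<rho>::real. prob_space.expectation M
               (\<lambda>\<omega>. frob_sq ((1 - \<rho>) *\<^sub>R sample_cov n (\<lambda>i. X i \<omega>) + \<rho> *\<^sub>R shrink_target (sample_cov n (\<lambda>i. X i \<omega>)) - Sig))"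
  shows "(\<exists>!\<rho>. \<forall>r. R \<rho> \<le> R r)
    \<and> (\<forall>\<rho>. (\<forall>r. R \<rho> \<le> R r) \<longrightarrow>
          \<rho> = prob_space.expectation M (\<lambda>\<omega>. trace ((Sig - sample_cov n (\<lambda>i. X i \<omega>)) ** (shrink_target (sample_cov n (\<lambda>i. X i \<omega>)) - sample_cov n (\<lambda>i. X i \<omega>))))
                / prob_space.expectation M (\<lambda>\<omega>. frob_sq (sample_cov n (\<lambda>i. X i \<omega>) - shrink_target (sample_cov n (\<lambda>i. X i \<omega>))))
        \<and> \<rho> = ((1 - 2 / real CARD('p)) * trace (Sig ** Sig) + (trace Sig)^2)
              / ((real n + 1 - 2 / real CARD('p)) * trace (Sig ** Sig)
                 + (1 - real n / real CARD('p)) * (trace Sig)^2))"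
proof -
  let ?S = "\<lambda>\<omega>. sample_cov n (\<lambda>i. X i \<omega>)" and ?p = "real CARD('p)"
  note setting = assms(1) assms(3-6)
  define al where "al = prob_space.expectation M (\<lambda>\<omega>. frob_sq (?S \<omega> - Sig))"
  define be where "be = prob_space.expectation M
    (\<lambda>\<omega>. trace ((Sig - ?S \<omega>) ** (shrink_target (?S \<omega>) - ?S \<omega>)))"
  define ga where "ga = prob_space.expectation M (\<lambda>\<omega>. frob_sq (?S \<omega> - shrink_target (?S \<omega>)))"
  have R: "R r = al - 2 * r * be + r\<^sup>2 * ga" for r
    unfolding R_def al_def be_def ga_def by (rule expected_risk_quadratic[OF setting])
  have be: "be = ((1 - 2 / ?p) * trace (Sig ** Sig) + (trace Sig)\<^sup>2) / real n"
    unfolding be_def by (rule expectation_cross_term(2)[OF setting])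
  have ga: "ga = ((real n + 1 - 2 / ?p) * trace (Sig ** Sig) + (1 - real n / ?p) * (trace Sig)\<^sup>2)
      / real n"
    unfolding ga_def by (rule expectation_target_gap(2)[OF setting])
  have "(real n + 1 - 2 / ?p) * trace (Sig ** Sig) + (1 - real n / ?p) * (trace Sig)\<^sup>2 > 0"
    using sym_posdef_shrinkage_denominator_pos[OF assms(4) assms(2)] .
  then have "ga > 0"
    using assms(3) by (simp add: ga)
  moreover have "be / ga = ((1 - 2 / ?p) * trace (Sig ** Sig) + (trace Sig)\<^sup>2)
      / ((real n + 1 - 2 / ?p) * trace (Sig ** Sig) + (1 - real n / ?p) * (trace Sig)\<^sup>2)"
    using assms(3) by (simp add: be ga)
  ultimately show ?thesis
    using quadratic_unique_minimizer[of ga R al be] R by (simp add: be_def ga_def)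
qed

end
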